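(* For every base $\mathcal{B}$, atomic multiset $L$, finite multiset $\Gamma$ of ILL formulae and ILL formula $\varphi$: if $\Gamma\Vdash^L_{\mathcal{B}}\varphi$, then $\Gamma\Vdash^L_{\mathcal{C}}\varphi$ for every base $\mathcal{C}\supseteq\mathcal{B}$.
   Context: Fix a set $\mathbb{A}$ of propositional atoms. ILL formulae: $\phi ::= p\in\mathbb{A} \mid \top \mid 0 \mid 1 \mid \phi\multimap\phi \mid \phi\otimes\phi \mid \phi\,\&\,\phi \mid \phi\oplus\phi \mid\ !\phi$. All multisets are finite; "$\Gamma,\Delta$" denotes multiset union. Atomic rules and bases: an atomic sequent is $P\Rightarrow p$ with $P$ a multiset of atoms, $p$ an atom. An atomic box is a multiset of atomic sequents. An atomic rule is a triple $\langle\mathbf{A},\mathbf{S},p\rangle$ with $\mathbf{A}$ a multiset of atomic boxes, $\mathbf{S}$ an atomic box, $p$ an atom. A base is a set of atomic rules. An atom $p$ is persistent in $\mathcal{B}$ if some $\langle\varnothing,\mathbf{S},p\rangle\in\mathcal{B}$ has $\mathbf{S}\neq\varnothing$. Derivability $\vdash_{\mathcal{B}}$: (Ref) $p\vdash_{\mathcal{B}}p$; (App) if $\langle\mathbf{A},\mathbf{S},p\rangle\in\mathcal{B}$ with $\mathbf{A}=\{\mathbf{T}_1,\dots,\mathbf{T}_m\}$, and there are atomic multisets $C_1,\dots,C_n$ ($n\ge m$) and a multiset $D=\{d_{m+1},\dots,d_n\}$ of atoms persistent in $\mathcal{B}$ such that $C_i,Q\vdash_{\mathcal{B}}q$ for every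 $i\le m$ and every $Q\Rightarrow q\in\mathbf{T}_i$, $C_j\vdash_{\mathcal{B}}d_j$ for every $m<j\le n$, and $D,U\vdash_{\mathcal{B}}v$ for every $U\Rightarrow v\in\mathbf{S}$, then $C_1,\dots,C_n\vdash_{\mathcal{B}}p$. Support $\Vdash^L_{\mathcal{B}}$ (base $\mathcal{B}$, atomic multiset $L$), by induction on formulae: $\Vdash^L_{\mathcal{B}}p$ iff $L\vdash_{\mathcal{B}}p$; $\Vdash^L_{\mathcal{B}}\varphi\multimap\psi$ iff $\varphi\Vdash^L_{\mathcal{B}}\psi$; $\Vdash^L_{\mathcal{B}}\varphi\otimes\psi$ iff for all $\mathcal{C}\supseteq\mathcal{B}$, atomic $K$, atoms $p$: if $\varphi,\psi\Vdash^K_{\mathcal{C}}p$ then $\Vdash^{L,K}_{\mathcal{C}}p$; $\Vdash^L_{\mathcal{B}}1$ iff for all $\mathcal{C}\supseteq\mathcal{B}$, $K$, $p$: if $\Vdash^K_{\mathcal{C}}p$ then $\Vdash^{L,K}_{\mathcal{C}}p$; $\Vdash^L_{\mathcal{B}}\varphi\&\psi$ iff $\Vdash^L_{\mathcal{B}}\varphi$ and $\Vdash^L_{\mathcal{B}}\psi$; $\Vdash^L_{\mathcal{B}}\varphi\oplus\psi$ iff for all $\mathcal{C}\supseteq\mathcal{B}$, $K$, $p$: if $\varphi\Vdash^K_{\mathcal{C}}p$ and $\psi\Vdash^K_{\mathcal{C}}p$ then $\Vdash^{L,K}_{\mathcal{C}}p$; $\Vdash^L_{\mathcal{B}}0$ iff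 $\Vdash^{L,K}_{\mathcal{B}}p$ for all atoms $p$ and atomic $K$; $\Vdash^L_{\mathcal{B}}\top$ always; $\Vdash^L_{\mathcal{B}}!\varphi$ iff for all $\mathcal{C}\supseteq\mathcal{B}$, $K$, $p$: if (for all $\mathcal{D}\supseteq\mathcal{C}$, $\Vdash^{\varnothing}_{\mathcal{D}}\varphi$ implies $\Vdash^K_{\mathcal{D}}p$) then $\Vdash^{L,K}_{\mathcal{C}}p$. For nonempty multisets: $\Vdash^L_{\mathcal{B}}\Gamma,\Delta$ iff $L=K,M$ with $\Vdash^K_{\mathcal{B}}\Gamma$ and $\Vdash^M_{\mathcal{B}}\Delta$. For a nonempty antecedent written $!\Delta,\Theta$, where $!\Delta$ collects the formulae with top-level connective $!$ (with $\Delta$ the formulae under those $!$) and $\Theta$ contains none: $!\Delta,\Theta\Vdash^L_{\mathcal{B}}\varphi$ iff for all $\mathcal{C}\supseteq\mathcal{B}$ and atomic $K$, if $\Vdash^{\varnothing}_{\mathcal{C}}\delta$ for every $\delta\in\Delta$ and $\Vdash^K_{\mathcal{C}}\Theta$ then $\Vdash^{L,K}_{\mathcal{C}}\varphi$ (when $\Theta$ is empty, $K$ is empty). An empty antecedent: $\varnothing\Vdash^L_{\mathcal{B}}\varphi$ means $\Vdash^L_{\mathcal{B}}\varphi$. *)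

theory Defs
  imports Main "HOL-Library.Multiset"
begin

datatype 'a form =
    Atom 'a
  | Top
  | Zero
  | One
  | Lolli "'a form" "'a form"
  | Tensor "'a form" "'a form"
  | With "'a form" "'a form"
  | Plus "'a form" "'a form"
  | Bang "'a form"

fun is_bang :: "'a form \<Rightarrow> bool" where
  "is_bang (Bang _) = True"
| "is_bang _ = False"

(* atomic sequent  P => p *)
type_synonym 'a aseq = "'a multiset \<times> 'a"
type_synonym 'a abox = "'a aseq multiset"
(* atomic rule <A, S, p> *)
type_synonym 'a arule = "'a abox multiset \<times> 'a abox \<times> 'a"
type_synonym 'a base = "'a arule set"

definition persistent :: "'a base \<Rightarrow> 'a \<Rightarrow> bool" where
  "persistent B p \<longleftrightarrow> (\<exists>S. ({#}, S, p) \<in> B \<and> S \<noteq> {#})"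

text \<open>Derivability in a base.  In (App) the boxes T_1..T_m of the rule are enumerated
  by the list Ts (mset Ts = A), the contexts C_1..C_m by Cs, and the pairs
  (C_j, d_j) for m < j <= n by the list Es.\<close>

inductive derives :: "'a base \<Rightarrow> 'a multiset \<Rightarrow> 'a \<Rightarrow> bool" for B :: "'a base" where
  Ref: "derives B {#p#} p"
| App: "\<lbrakk> (A, S, p) \<in> B; mset Ts = A; length Cs = length Ts;
          \<forall>i<length Ts. \<forall>Q q. (Q, q) \<in># Ts ! i \<longrightarrow> derives B (Cs ! i + Q) q;
          \<forall>j<length Es. derives B (fst (Es ! j)) (snd (Es ! j)) \<and> persistent B (snd (Es ! j));
          \<forall>U v. (U, v) \<in># S \<longrightarrow> derives B (mset (map snd Es) + U) v \<rbrakk>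
        \<Longrightarrow> derives B (sum_list Cs + sum_list (map fst Es)) p"

text \<open>Support of a multiset of formulae, parametric in the support relation S for
  single formulae:  L = L_1, ..., L_k with each L_i supporting the i-th formula.\<close>

definition ms_gen ::
  "('a form \<Rightarrow> 'a base \<Rightarrow> 'a multiset \<Rightarrow> bool) \<Rightarrow> 'a base \<Rightarrow> 'a multiset \<Rightarrow> 'a form multiset \<Rightarrow> bool"
where
  "ms_gen S B L \<Gamma> \<longleftrightarrow> (\<exists>xs Ls. mset xs = \<Gamma> \<and> length Ls = length xs \<and> L = sum_list Ls \<and>
                          (\<forall>i<length xs. S (xs ! i) B (Ls ! i)))"

text \<open>Support of a sequent  Gamma |=^L_B (conclusion), parametric in S; the conclusion is
  given as a predicate on (base, atomic multiset).\<close>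

definition ante_gen ::
  "('a form \<Rightarrow> 'a base \<Rightarrow> 'a multiset \<Rightarrow> bool) \<Rightarrow> 'a form multiset \<Rightarrow> 'a base \<Rightarrow> 'a multiset
     \<Rightarrow> ('a base \<Rightarrow> 'a multiset \<Rightarrow> bool) \<Rightarrow> bool"
where
  "ante_gen S \<Gamma> B L concl \<longleftrightarrow>
     (if \<Gamma> = {#} then concl B L
      else (\<forall>C K. B \<subseteq> C \<longrightarrow> (\<forall>\<delta>. Bang \<delta> \<in># \<Gamma> \<longrightarrow> S \<delta> C {#}) \<longrightarrow>
                  ms_gen S C K (filter_mset (\<lambda>\<chi>. \<not> is_bang \<chi>) \<Gamma>) \<longrightarrow> concl C (L + K)))"

lemma ms_gen_cong:
  assumes "\<And>\<chi> C K. \<chi> \<in># \<Gamma> \<Longrightarrow> S \<chi> C K = S' \<chi> C K"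
  shows "ms_gen S B L \<Gamma> = ms_gen S' B L \<Gamma>"
  unfolding ms_gen_def
  using assms by (metis in_set_conv_nth set_mset_mset)

lemma ante_gen_cong [fundef_cong]:
  assumes "\<Gamma> = \<Gamma>'" "B = B'" "L = L'"
    and "\<And>\<chi> C K. \<chi> \<in># \<Gamma>' \<Longrightarrow> S \<chi> C K = S' \<chi> C K"
    and "\<And>\<delta> C K. Bang \<delta> \<in># \<Gamma>' \<Longrightarrow> S \<delta> C K = S' \<delta> C K"
    and "\<And>C K. concl C K = concl' C K"
  shows "ante_gen S \<Gamma> B L concl = ante_gen S' \<Gamma>' B' L' concl'"
proof -
  have "ms_gen S C K (filter_mset (\<lambda>\<chi>. \<not> is_bang \<chi>) \<Gamma>') =
        ms_gen S' C K (filter_mset (\<lambda>\<chi>. \<not> is_bang \<chi>) \<Gamma>')" for C K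
    by (rule ms_gen_cong) (use assms(4) in auto)
  then show ?thesis
    unfolding ante_gen_def using assms by (simp cong: imp_cong)
qed

text \<open>Support of a formula at base B with atomic multiset L.  Clauses with a sequent
  (antecedent) in them use ante_gen with S = supp itself; an atomic conclusion
  |=^K_C p is derivability  K |-_C p.\<close>

function supp :: "'a form \<Rightarrow> 'a base \<Rightarrow> 'a multiset \<Rightarrow> bool" where
  "supp (Atom p) B L \<longleftrightarrow> derives B L p"
| "supp (Lolli \<phi> \<psi>) B L \<longleftrightarrow> ante_gen supp {#\<phi>#} B L (supp \<psi>)"
| "supp (Tensor \<phi> \<psi>) B L \<longleftrightarrow>
     (\<forall>C K p. B \<subseteq> C \<longrightarrow> ante_gen supp {#\<phi>, \<psi>#} C K (\<lambda>D M. derives D M p) \<longrightarrow> derives C (L + K) p)"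
| "supp One B L \<longleftrightarrow> (\<forall>C K p. B \<subseteq> C \<longrightarrow> derives C K p \<longrightarrow> derives C (L + K) p)"
| "supp (With \<phi> \<psi>) B L \<longleftrightarrow> supp \<phi> B L \<and> supp \<psi> B L"
| "supp (Plus \<phi> \<psi>) B L \<longleftrightarrow>
     (\<forall>C K p. B \<subseteq> C \<longrightarrow> ante_gen supp {#\<phi>#} C K (\<lambda>D M. derives D M p) \<longrightarrow>
                         ante_gen supp {#\<psi>#} C K (\<lambda>D M. derives D M p) \<longrightarrow> derives C (L + K) p)"
| "supp Zero B L \<longleftrightarrow> (\<forall>K p. derives B (L + K) p)"
| "supp Top B L \<longleftrightarrow> True"
| "supp (Bang \<phi>) B L \<longleftrightarrow>
     (\<forall>C K p. B \<subseteq> C \<longrightarrow> (\<forall>D. C \<subseteq> D \<longrightarrow> supp \<phi> D {#} \<longrightarrow> derives D K p) \<longrightarrow> derives C (L + K) p)"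
  by pat_completeness auto
termination
  by (relation "measure (\<lambda>(\<phi>, B, L). size \<phi>)") (auto split: if_splits)

definition forces :: "'a form multiset \<Rightarrow> 'a base \<Rightarrow> 'a multiset \<Rightarrow> 'a form \<Rightarrow> bool" where
  "forces \<Gamma> B L \<phi> \<longleftrightarrow> ante_gen supp \<Gamma> B L (supp \<phi>)"

end

theory Submission
  imports Defs
begin

text \<open>Adding rules to a base can only enlarge derivability, and persistence of an atom
  survives the extension.  Every other clause of support either reduces to
  derivability (atoms, \<open>0\<close>), to its immediate subformulae (\<open>&\<close>), or quantifies over all
  extensions of the base (\<open>\<otimes>\<close>, \<open>1\<close>, \<open>\<oplus>\<close>, \<open>!\<close>, and every nonempty antecedent), where
  transitivity of \<open>\<subseteq>\<close> does the work.\<close>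

lemma persistent_mono:
  assumes "persistent B p" and "B \<subseteq> C"
  shows "persistent C p"
  using assms unfolding persistent_def by blast

lemma derives_mono:
  assumes "derives B L p" and "B \<subseteq> C"
  shows "derives C L p"
  using assms(1)
proof (induction rule: derives.induct)
  case (Ref p)
  show ?case by (rule derives.Ref)
next
  case (App A S p Ts Cs Es)
  show ?case
  proof (rule derives.App[OF _ App.hyps(2,3)])
    show "(A, S, p) \<in> C"
      using App.hyps(1) assms(2) by blast
  qed (use App.IH persistent_mono[OF _ assms(2)] in auto)
qed

lemma ante_gen_mono:
  assumes "\<Gamma> \<noteq> {#}" and "ante_gen S \<Gamma> B L concl" and "B \<subseteq> C"
  shows "ante_gen S \<Gamma> C L concl"
  using assms unfolding ante_gen_def by auto

lemma supp_mono:
  assumes "supp \<phi> B L" and "B \<subseteq> C"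
  shows "supp \<phi> C L"
  using assms
proof (induction \<phi> arbitrary: B C L)
  case (Atom p)
  from Atom.prems show ?case by (auto intro: derives_mono)
next
  case Zero
  from Zero.prems show ?case by (auto intro: derives_mono)
next
  case (Lolli \<phi> \<psi>)
  from Lolli.prems show ?case by (simp add: ante_gen_mono)
next
  case (With \<phi> \<psi>)
  then show ?case by auto
next
  case Top
  show ?case by simp
next
  case (Tensor \<phi> \<psi>)
  from Tensor.prems show ?case by simp
next
  case (Plus \<phi> \<psi>)
  from Plus.prems show ?case by simp
next
  case One
  from One.prems show ?case by simp
next
  case (Bang \<phi>)
  from Bang.prems show ?case by simp
qed

theorem lemma3:
  fixes B C :: "'a base" and L :: "'a multiset" and \<Gamma> :: "'a form multiset" and \<phi> :: "'a form"
  assumes "forces \<Gamma> B L \<phi>" and "B \<subseteq> C"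
  shows "forces \<Gamma> C L \<phi>"
proof (cases "\<Gamma> = {#}")
  case True
  with assms show ?thesis
    unfolding forces_def ante_gen_def by (simp add: supp_mono)
next
  case False
  with assms show ?thesis
    unfolding forces_def by (blast intro: ante_gen_mono)
qed

end
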